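(* Let $H_B=(V_B,E_B)$ be a 3-uniform hypergraph, let $\varepsilon=1/|V_B|^{100}$, and let $\{\mathbf v_a\}_{a\in V_B\cup\{\emptyset\}}\subset\mathbb R^{|V_B|}$ be a feasible solution of the SDP below with respect to which every vertex is $\varepsilon$-balanced. Let $t\in\mathbb R$, let $g\sim N(0,1)^{|V_B|}$ be a standard Gaussian vector, and let $S(t)=\{a\in V_B:\langle\bar{\mathbf u}_a,g\rangle\ge t\}$. Then for any two vertices $a,b$ that lie in a common edge of $H_B$, $$\Pr[a\in S(t)\wedge b\in S(t)]\le \bar\Phi(2t)+\frac{2}{|V_B|^{25}}.$$
   Context: SDP: unit vectors $\mathbf v_a$ for $a\in V_B\cup\{\emptyset\}$ with $\mathbf v_a+\mathbf v_b+\mathbf v_c=-\mathbf v_\emptyset$ for every edge $\{a,b,c\}$. $\gamma_a=\langle\mathbf v_a,\mathbf v_\emptyset\rangle$; vertex $a$ is $\varepsilon$-balanced if $\gamma_a\in[-1/3-\varepsilon,-1/3+\varepsilon]$; $\bar{\mathbf u}_a=\frac{\mathbf v_a-\gamma_a\mathbf v_\emptyset}{\sqrt{1-\gamma_a^2}}$. $\bar\Phi(t)=\Pr_{x\sim N(0,1)}[x\ge t]$. *)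

theory Defs
  imports "HOL-Probability.Probability"
begin

text \<open>Vertices of H_B are the elements of a finite type 'v; V_B = UNIV, so
  R^{|V_B|} is rendered as real^'v. The SDP vector of the special element
  (empty set) is a separate vector v0.\<close>

definition gauss_measure :: "('v::finite \<Rightarrow> real) measure" where
  "gauss_measure = PiM UNIV (\<lambda>_. std_normal_distribution)"

definition Phibar :: "real \<Rightarrow> real" where
  "Phibar t = measure std_normal_distribution {t..}"

definition ip_gauss :: "real^'v::finite \<Rightarrow> ('v \<Rightarrow> real) \<Rightarrow> real" where
  "ip_gauss u g = (\<Sum>i\<in>UNIV. u $ i * g i)"

definition sdp_feasible :: "'v::finite set set \<Rightarrow> ('v \<Rightarrow> real^'v) \<Rightarrow> real^'v \<Rightarrow> bool" where
  "sdp_feasible E v v0 \<longleftrightarrow> norm v0 = 1 \<and> (\<forall>a. norm (v a) = 1) \<and>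
     (\<forall>e\<in>E. (\<Sum>x\<in>e. v x) = - v0)"

definition gam :: "('v \<Rightarrow> real^'w::finite) \<Rightarrow> real^'w \<Rightarrow> 'v \<Rightarrow> real" where
  "gam v v0 a = inner (v a) v0"

definition balanced :: "real \<Rightarrow> ('v \<Rightarrow> real^'w::finite) \<Rightarrow> real^'w \<Rightarrow> 'v \<Rightarrow> bool" where
  "balanced \<epsilon> v v0 a \<longleftrightarrow> -1/3 - \<epsilon> \<le> gam v v0 a \<and> gam v v0 a \<le> -1/3 + \<epsilon>"

definition ubar :: "('v \<Rightarrow> real^'w::finite) \<Rightarrow> real^'w \<Rightarrow> 'v \<Rightarrow> real^'w" where
  "ubar v v0 a = (1 / sqrt (1 - (gam v v0 a)\<^sup>2)) *\<^sub>R (v a - gam v v0 a *\<^sub>R v0)"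

definition Sset :: "('v::finite \<Rightarrow> real^'v) \<Rightarrow> real^'v \<Rightarrow> real \<Rightarrow> ('v \<Rightarrow> real) \<Rightarrow> 'v set" where
  "Sset v v0 t g = {a. ip_gauss (ubar v v0 a) g \<ge> t}"

end

theory Submission
  imports Defs
begin

(* For t > 0 both events together force <u_a + u_b, g> >= 2t, and <u_a + u_b, g> is a centred
   Gaussian with standard deviation sigma = |u_a + u_b|.  The SDP constraint
   v_a + v_b + v_c = -v_0 on an edge, with all gammas within eps of -1/3, gives
   <u_a, u_b> = -1/2 + O(eps), so sigma <= 1 + 3 eps.  Inflating the standard deviation from 1
   to sigma moves the tail probability at 2t by at most (sigma - 1) * sup_y y phi(y) <= sigma - 1.
   For t <= 0 the single event for a already has probability Phibar t <= Phibar (2t). *)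

lemma prob_space_gauss_measure: "prob_space (gauss_measure :: ('v::finite \<Rightarrow> real) measure)"
  unfolding gauss_measure_def by (intro prob_space_PiM prob_space_normal_density) auto

lemma distr_gauss_measure_coordinate:
  "distr (gauss_measure :: ('v::finite \<Rightarrow> real) measure) std_normal_distribution (\<lambda>g. g i)
     = std_normal_distribution"
  unfolding gauss_measure_def by (rule distr_PiM_component) (auto intro: prob_space_normal_density)

lemma indep_vars_gauss_coordinates:
  "prob_space.indep_vars (gauss_measure :: ('v::finite \<Rightarrow> real) measure)
     (\<lambda>_. std_normal_distribution) (\<lambda>i g. g i) UNIV"
proof -
  interpret prob_space "gauss_measure :: ('v \<Rightarrow> real) measure" by (rule prob_space_gauss_measure)
  have "distr gauss_measure gauss_measure (\<lambda>g::'v \<Rightarrow> real. \<lambda>i\<in>UNIV. g i)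
          = distr gauss_measure gauss_measure (\<lambda>g. g)"
    by (rule distr_cong) (auto simp: restrict_def)
  then have restrict_id:
    "distr gauss_measure gauss_measure (\<lambda>g::'v \<Rightarrow> real. \<lambda>i\<in>UNIV. g i) = gauss_measure"
    by simp
  have rv: "random_variable std_normal_distribution (\<lambda>g. g i)" for i :: 'v
    by (simp add: gauss_measure_def)
  have coordinates: "(\<Pi>\<^sub>M i\<in>UNIV. distr gauss_measure std_normal_distribution (\<lambda>g. g i))
                       = (gauss_measure :: ('v \<Rightarrow> real) measure)"
    by (simp only: distr_gauss_measure_coordinate) (simp add: gauss_measure_def)
  show ?thesis
    unfolding indep_vars_iff_distr_eq_PiM[OF UNIV_not_empty rv] coordinates
      gauss_measure_def[symmetric]
    by (rule restrict_id)
qed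

lemma distributed_ip_gauss:
  fixes c :: "real^'v::finite"
  assumes "c \<noteq> 0"
  shows "distributed gauss_measure lborel (ip_gauss c) (normal_density 0 (norm c))"
proof -
  interpret prob_space "gauss_measure :: ('v \<Rightarrow> real) measure" by (rule prob_space_gauss_measure)
  have coordinate: "distributed gauss_measure lborel (\<lambda>g. g i) std_normal_density" for i :: 'v
  proof -
    have "distr gauss_measure lborel (\<lambda>g. g i) = distr gauss_measure std_normal_distribution (\<lambda>g. g i)"
      by (rule distr_cong) auto
    moreover have "(\<lambda>g. g i) \<in> measurable gauss_measure lborel"
      by (simp add: gauss_measure_def)
    ultimately show ?thesis
      using distr_gauss_measure_coordinate[of i] by (simp add: distributed_def)
  qed
  define I where "I = {i. c $ i \<noteq> 0}"
  have "I \<noteq> {}" using assms by (auto simp: I_def vec_eq_iff)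
  have scaled: "distributed gauss_measure lborel (\<lambda>g. c $ i * g i) (normal_density 0 \<bar>c $ i\<bar>)"
    if "i \<in> I" for i
    using normal_density_affine[OF coordinate, of "c $ i" 0 i] that by (simp add: I_def)
  have "indep_vars (\<lambda>_. borel) (\<lambda>i. (\<lambda>x. c $ i * x) \<circ> (\<lambda>g. g i)) UNIV"
    by (rule indep_vars_compose[OF indep_vars_gauss_coordinates]) auto
  then have "indep_vars (\<lambda>_. borel) (\<lambda>i g. c $ i * g i) UNIV"
    by (simp add: o_def)
  then have "indep_vars (\<lambda>_. borel) (\<lambda>i g. c $ i * g i) I"
    by (rule indep_vars_subset) auto
  from sum_indep_normal[OF _ \<open>I \<noteq> {}\<close> this _ scaled]
  have "distributed gauss_measure lborel (\<lambda>g. \<Sum>i\<in>I. c $ i * g i)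
          (normal_density 0 (sqrt (\<Sum>i\<in>I. \<bar>c $ i\<bar>\<^sup>2)))"
    by (simp add: I_def)
  moreover have "(\<Sum>i\<in>I. c $ i * g i) = ip_gauss c g" for g
    unfolding ip_gauss_def by (rule sum.mono_neutral_left) (auto simp: I_def)
  moreover have "sqrt (\<Sum>i\<in>I. \<bar>c $ i\<bar>\<^sup>2) = norm c"
    unfolding norm_vec_def L2_set_def real_norm_def
    by (subst sum.mono_neutral_left[of UNIV I]) (auto simp: I_def)
  ultimately show ?thesis by simp
qed

lemma sets_ip_gauss_ge:
  "{g \<in> space gauss_measure. x \<le> ip_gauss c g} \<in> sets (gauss_measure :: ('v::finite \<Rightarrow> real) measure)"
  unfolding ip_gauss_def gauss_measure_def by measurable

lemma ip_gauss_add: "ip_gauss (c + d) g = ip_gauss c g + ip_gauss d g"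
  by (simp add: ip_gauss_def sum.distrib algebra_simps)

lemma measure_ip_gauss_ge:
  fixes c :: "real^'v::finite"
  assumes "c \<noteq> 0"
  shows "measure gauss_measure {g \<in> space gauss_measure. x \<le> ip_gauss c g} = Phibar (x / norm c)"
proof -
  interpret prob_space "gauss_measure :: ('v \<Rightarrow> real) measure" by (rule prob_space_gauss_measure)
  let ?Z = "\<lambda>g. (ip_gauss c g - 0) / norm c"
  have pos: "norm c > 0" using assms by simp
  have Z: "distributed gauss_measure lborel ?Z std_normal_density"
    using distributed_ip_gauss[OF assms] normal_standard_normal_convert[OF pos] by simp
  have "{g \<in> space gauss_measure. x \<le> ip_gauss c g} = ?Z -` {x / norm c..} \<inter> space gauss_measure"
    using pos by (auto simp: field_simps)
  also have "measure gauss_measure \<dots> = measure (distr gauss_measure lborel ?Z) {x / norm c..}"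
    using Z by (intro measure_distr[symmetric]) (auto simp: distributed_def)
  also have "\<dots> = Phibar (x / norm c)"
    using Z by (simp add: Phibar_def distributed_def)
  finally show ?thesis .
qed

lemma Phibar_antimono:
  assumes "x \<le> y"
  shows "Phibar y \<le> Phibar x"
proof -
  interpret prob_space std_normal_distribution by (rule prob_space_normal_density) simp
  show ?thesis
    unfolding Phibar_def by (rule finite_measure_mono) (use assms in auto)
qed

lemma std_normal_density_antimono:
  assumes "0 \<le> y" "y \<le> z"
  shows "std_normal_density z \<le> std_normal_density y"
proof -
  have "y\<^sup>2 \<le> z\<^sup>2" using assms by (intro power_mono)
  then show ?thesis unfolding std_normal_density_def by (intro mult_left_mono) auto
qed

lemma Phibar_le_add_density:
  assumes "0 \<le> y" "y \<le> x"
  shows "Phibar y \<le> Phibar x + (x - y) * std_normal_density y"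
proof -
  interpret prob_space std_normal_distribution by (rule prob_space_normal_density) simp
  have "{y..} = {y..<x} \<union> {x..}" using assms by auto
  then have split: "Phibar y = measure std_normal_distribution {y..<x} + Phibar x"
    unfolding Phibar_def by (simp only:) (rule finite_measure_Union; auto)
  have "emeasure std_normal_distribution {y..<x}
          = (\<integral>\<^sup>+z. ennreal (std_normal_density z) * indicator {y..<x} z \<partial>lborel)"
    by (rule emeasure_density) auto
  also have "\<dots> \<le> (\<integral>\<^sup>+z. ennreal (std_normal_density y) * indicator {y..<x} z \<partial>lborel)"
    using assms(1) std_normal_density_antimono
    by (intro nn_integral_mono) (auto split: split_indicator intro: ennreal_leI)
  also have "\<dots> = ennreal ((x - y) * std_normal_density y)"
    using assms by (simp add: nn_integral_cmult_indicator ennreal_mult' mult.commute)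
  finally have "measure std_normal_distribution {y..<x} \<le> (x - y) * std_normal_density y"
    using assms by (simp add: emeasure_eq_measure ennreal_le_iff)
  then show ?thesis using split by simp
qed

lemma mult_std_normal_density_le_1:
  assumes "0 \<le> y"
  shows "y * std_normal_density y \<le> 1"
proof -
  have "y \<le> 1 + y\<^sup>2 / 2" using sum_power2_ge_zero[of "y - 1" 0]
    by (simp add: power2_eq_square algebra_simps)
  also have "\<dots> \<le> exp (y\<^sup>2 / 2)" by (rule exp_ge_add_one_self)
  finally have "y * exp (- y\<^sup>2 / 2) \<le> 1" by (simp add: exp_minus field_simps)
  moreover have "1 / sqrt (2 * pi) \<le> 1" using pi_gt3 by (simp add: divide_le_eq real_le_rsqrt)
  ultimately have "(1 / sqrt (2 * pi)) * (y * exp (- y\<^sup>2 / 2)) \<le> 1 * 1"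
    using assms by (intro mult_mono) auto
  then show ?thesis unfolding std_normal_density_def by simp
qed

lemma Phibar_divide_le:
  assumes "0 \<le> x" "1 \<le> \<sigma>"
  shows "Phibar (x / \<sigma>) \<le> Phibar x + (\<sigma> - 1)"
proof -
  define y where "y = x / \<sigma>"
  have "0 \<le> y" "y \<le> x"
    using assms mult_left_mono[of 1 \<sigma> x] by (auto simp: y_def field_simps)
  have "(x - y) * std_normal_density y = (\<sigma> - 1) * (y * std_normal_density y)"
    using assms by (simp add: y_def field_simps)
  also have "\<dots> \<le> \<sigma> - 1"
    using assms mult_std_normal_density_le_1[OF \<open>0 \<le> y\<close>] by (simp add: mult_left_le)
  finally show ?thesis
    using Phibar_le_add_density[OF \<open>0 \<le> y\<close> \<open>y \<le> x\<close>] by (simp add: y_def)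
qed

lemma measure_ip_gauss_ge_le:
  fixes c :: "real^'v::finite"
  assumes "0 < x" "0 \<le> \<delta>" "norm c \<le> 1 + \<delta>"
  shows "measure gauss_measure {g \<in> space gauss_measure. x \<le> ip_gauss c g} \<le> Phibar x + \<delta>"
proof (cases "c = 0")
  case True
  then show ?thesis
    using assms by (simp add: ip_gauss_def Phibar_def)
next
  case False
  then have "measure gauss_measure {g \<in> space gauss_measure. x \<le> ip_gauss c g} = Phibar (x / norm c)"
    by (rule measure_ip_gauss_ge)
  also have "\<dots> \<le> Phibar x + \<delta>"
  proof (cases "norm c \<le> 1")
    case True
    have "x \<le> x / norm c" using True False assms(1) by (simp add: field_simps)
    then show ?thesis using Phibar_antimono assms(2) by fastforce
  next
    case False
    then show ?thesis using Phibar_divide_le[of x "norm c"] assms by simp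
  qed
  finally show ?thesis .
qed

lemma measure_ip_gauss_ge_both_le:
  fixes c d :: "real^'v::finite"
  assumes "norm c = 1" "0 \<le> \<delta>" "norm (c + d) \<le> 1 + \<delta>"
  shows "measure gauss_measure {g \<in> space gauss_measure. t \<le> ip_gauss c g \<and> t \<le> ip_gauss d g}
           \<le> Phibar (2 * t) + \<delta>"
proof -
  interpret prob_space "gauss_measure :: ('v \<Rightarrow> real) measure" by (rule prob_space_gauss_measure)
  let ?both = "{g \<in> space gauss_measure. t \<le> ip_gauss c g \<and> t \<le> ip_gauss d g}"
  show ?thesis
  proof (cases "t \<le> 0")
    case True
    have "measure gauss_measure ?both \<le> measure gauss_measure {g \<in> space gauss_measure. t \<le> ip_gauss c g}"
      by (intro finite_measure_mono sets_ip_gauss_ge) auto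
    also have "\<dots> = Phibar t"
      using measure_ip_gauss_ge[of c t] assms(1) by fastforce
    also have "\<dots> \<le> Phibar (2 * t)"
      using True by (intro Phibar_antimono) simp
    finally show ?thesis using assms(2) by simp
  next
    case False
    have "measure gauss_measure ?both
            \<le> measure gauss_measure {g \<in> space gauss_measure. 2 * t \<le> ip_gauss (c + d) g}"
      by (intro finite_measure_mono sets_ip_gauss_ge) (auto simp: ip_gauss_add)
    also have "\<dots> \<le> Phibar (2 * t) + \<delta>"
      using False assms by (intro measure_ip_gauss_ge_le) auto
    finally show ?thesis .
  qed
qed

lemma norm_sub_proj_unit_sq:
  fixes x u :: "'a::real_inner"
  assumes "norm x = 1" "norm u = 1"
  shows "(norm (x - inner x u *\<^sub>R u))\<^sup>2 = 1 - (inner x u)\<^sup>2"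
proof -
  have "inner x x = 1" "inner u u = 1" using assms by (simp_all flip: power2_norm_eq_inner)
  then show ?thesis
    unfolding power2_norm_eq_inner
    by (simp add: inner_diff_left inner_diff_right inner_commute power2_eq_square algebra_simps)
qed

lemma abs_gam_less_1_if_balanced:
  assumes "balanced \<epsilon> v v0 a" "\<epsilon> < 2/3"
  shows "\<bar>gam v v0 a\<bar> < 1"
  using assms unfolding balanced_def by linarith

lemma norm_ubar:
  assumes "norm (v a) = 1" "norm v0 = 1" "\<bar>gam v v0 a\<bar> < 1"
  shows "norm (ubar v v0 a) = 1"
proof -
  have "(gam v v0 a)\<^sup>2 < 1" using assms(3) by (simp add: abs_square_less_1)
  moreover have "(norm (v a - gam v v0 a *\<^sub>R v0))\<^sup>2 = 1 - (gam v v0 a)\<^sup>2"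
    unfolding gam_def using assms(1,2) by (rule norm_sub_proj_unit_sq)
  then have "norm (v a - gam v v0 a *\<^sub>R v0) = sqrt (1 - (gam v v0 a)\<^sup>2)"
    by (metis norm_ge_zero real_sqrt_unique)
  ultimately show ?thesis
    by (simp add: ubar_def)
qed

lemma gam_sum_edge:
  assumes "norm v0 = 1" "v a + v b + v c = - v0"
  shows "gam v v0 a + gam v v0 b + gam v v0 c = -1"
proof -
  have "inner (v a + v b + v c) v0 = - inner v0 v0" using assms(2) by simp
  then show ?thesis
    using assms(1) by (simp add: gam_def inner_add_left flip: power2_norm_eq_inner)
qed

(* On an edge the components w x = v x - gam x v0 orthogonal to v0 sum to zero, so
   norm (w c)^2 = norm (w a + w b)^2 determines the inner product of w a and w b. *)

lemma inner_ubar_edge: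
  assumes unit: "norm (v a) = 1" "norm (v b) = 1" "norm (v c) = 1" "norm v0 = 1"
    and edge: "v a + v b + v c = - v0"
  shows "2 * inner (ubar v v0 a) (ubar v v0 b)
           = ((gam v v0 a)\<^sup>2 + (gam v v0 b)\<^sup>2 - (gam v v0 c)\<^sup>2 - 1)
             / (sqrt (1 - (gam v v0 a)\<^sup>2) * sqrt (1 - (gam v v0 b)\<^sup>2))"
proof -
  define w where "w x = v x - gam v v0 x *\<^sub>R v0" for x
  have norm_w: "(norm (w x))\<^sup>2 = 1 - (gam v v0 x)\<^sup>2" if "norm (v x) = 1" for x
    unfolding w_def gam_def using that unit(4) by (rule norm_sub_proj_unit_sq)
  have "w a + w b + w c = (v a + v b + v c)
          - (gam v v0 a + gam v v0 b + gam v v0 c) *\<^sub>R v0"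
    unfolding w_def by (simp add: algebra_simps)
  also have "\<dots> = 0"
    using edge gam_sum_edge[of v0 v a b c, OF unit(4) edge] by simp
  finally have "w c = - (w a + w b)"
    by (rule minus_unique[symmetric])
  then have "(norm (w c))\<^sup>2 = (norm (w a))\<^sup>2 + (norm (w b))\<^sup>2 + 2 * inner (w a) (w b)"
    by (simp add: power2_norm_eq_inner inner_diff_left inner_diff_right inner_commute)
  then have "2 * inner (w a) (w b)
               = (gam v v0 a)\<^sup>2 + (gam v v0 b)\<^sup>2 - (gam v v0 c)\<^sup>2 - 1"
    using norm_w unit by simp
  then show ?thesis
    by (simp add: ubar_def w_def[symmetric] inner_commute)
qed

lemma near_minus_third_bound:
  fixes ga gb gc e :: real
  assumes "\<bar>ga + 1/3\<bar> \<le> e" "\<bar>gb + 1/3\<bar> \<le> e" "\<bar>gc + 1/3\<bar> \<le> e" "e \<le> 1/10"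
  shows "2 + (ga\<^sup>2 + gb\<^sup>2 - gc\<^sup>2 - 1) / (sqrt (1 - ga\<^sup>2) * sqrt (1 - gb\<^sup>2)) \<le> 1 + 3 * e"
proof -
  have sq_bounds: "(1/3 - e)\<^sup>2 \<le> g\<^sup>2 \<and> g\<^sup>2 \<le> (1/3 + e)\<^sup>2" if "\<bar>g + 1/3\<bar> \<le> e" for g :: real
  proof -
    have "1/3 - e \<le> \<bar>g\<bar>" "\<bar>g\<bar> \<le> 1/3 + e" "0 \<le> 1/3 - e" using that assms(4) by auto
    then show ?thesis
      using power_mono[of "1/3 - e" "\<bar>g\<bar>" 2] power_mono[of "\<bar>g\<bar>" "1/3 + e" 2] by simp
  qed
  have "(1/3 + e)\<^sup>2 \<le> (1/2)\<^sup>2" using assms(1,4) by (intro power_mono) auto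
  then have half: "(1/3 + e)\<^sup>2 \<le> 1/2" by (simp add: power2_eq_square)
  define ra where "ra = sqrt (1 - ga\<^sup>2)"
  define rb where "rb = sqrt (1 - gb\<^sup>2)"
  have ra: "ra\<^sup>2 = 1 - ga\<^sup>2" "1/2 \<le> ra\<^sup>2" "0 \<le> ra"
    using sq_bounds[OF assms(1)] half by (auto simp: ra_def)
  have rb: "rb\<^sup>2 = 1 - gb\<^sup>2" "1/2 \<le> rb\<^sup>2" "0 \<le> rb"
    using sq_bounds[OF assms(2)] half by (auto simp: rb_def)
  have "1/2 * (1/2) \<le> ra\<^sup>2 * rb\<^sup>2"
    using ra rb by (intro mult_mono) auto
  then have "(1/2)\<^sup>2 \<le> (ra * rb)\<^sup>2"
    by (simp add: power_mult_distrib power2_eq_square mult_ac)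
  then have prod: "1/2 \<le> ra * rb"
    using ra rb by (simp add: abs_le_square_iff[symmetric])
  have "2 * (ra * rb) \<le> ra\<^sup>2 + rb\<^sup>2" using sum_squares_bound[of ra rb] by (simp add: mult.assoc)
  then have "ra * rb + (ga\<^sup>2 + gb\<^sup>2 - gc\<^sup>2 - 1) \<le> (ga\<^sup>2 + gb\<^sup>2) / 2 - gc\<^sup>2"
    using ra(1) rb(1) by argo
  also have "\<dots> \<le> (1/3 + e)\<^sup>2 - (1/3 - e)\<^sup>2"
    using sq_bounds[OF assms(1)] sq_bounds[OF assms(2)] sq_bounds[OF assms(3)] by argo
  also have "\<dots> = 4/3 * e" by (simp add: power2_eq_square algebra_simps)
  also have "\<dots> \<le> 3 * e * (ra * rb)"
    using prod assms(1) mult_left_mono[OF prod, of "3 * e"] by linarith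
  finally have "ga\<^sup>2 + gb\<^sup>2 - gc\<^sup>2 - 1 \<le> (3 * e - 1) * (ra * rb)"
    by (simp add: algebra_simps)
  then have "(ga\<^sup>2 + gb\<^sup>2 - gc\<^sup>2 - 1) / (ra * rb) \<le> 3 * e - 1"
    using prod by (simp add: pos_divide_le_eq)
  then show ?thesis
    unfolding ra_def rb_def by linarith
qed

lemma norm_ubar_add_le:
  assumes unit: "norm (v a) = 1" "norm (v b) = 1" "norm (v c) = 1" "norm v0 = 1"
    and edge: "v a + v b + v c = - v0"
    and bal: "balanced \<epsilon> v v0 a" "balanced \<epsilon> v v0 b" "balanced \<epsilon> v v0 c"
    and "\<epsilon> \<le> 1/10"
  shows "norm (ubar v v0 a + ubar v v0 b) \<le> 1 + 3 * \<epsilon>"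
proof -
  have abs_gam: "\<bar>gam v v0 x\<bar> < 1" if "balanced \<epsilon> v v0 x" for x
    using abs_gam_less_1_if_balanced[OF that] \<open>\<epsilon> \<le> 1/10\<close> by simp
  have near: "\<bar>gam v v0 x + 1/3\<bar> \<le> \<epsilon>" if "balanced \<epsilon> v v0 x" for x
    using that unfolding balanced_def by linarith
  have "0 \<le> \<epsilon>" using near[OF bal(1)] by linarith
  have "inner (ubar v v0 a) (ubar v v0 a) = 1" "inner (ubar v v0 b) (ubar v v0 b) = 1"
    using norm_ubar[OF unit(1,4) abs_gam[OF bal(1)]] norm_ubar[OF unit(2,4) abs_gam[OF bal(2)]]
    by (simp_all add: norm_eq_1)
  then have "(norm (ubar v v0 a + ubar v v0 b))\<^sup>2 = 2 + 2 * inner (ubar v v0 a) (ubar v v0 b)"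
    by (simp add: power2_norm_eq_inner inner_add_left inner_add_right inner_commute)
  also have "\<dots> \<le> 1 + 3 * \<epsilon>"
    unfolding inner_ubar_edge[of v a b c v0, OF unit edge]
    using near[OF bal(1)] near[OF bal(2)] near[OF bal(3)] \<open>\<epsilon> \<le> 1/10\<close>
    by (rule near_minus_third_bound)
  also have "\<dots> \<le> (1 + 3 * \<epsilon>)\<^sup>2"
    using self_le_power[of "1 + 3 * \<epsilon>" 2] \<open>0 \<le> \<epsilon>\<close> by simp
  finally show ?thesis
    by (rule power2_le_imp_le) (use \<open>0 \<le> \<epsilon>\<close> in simp)
qed

lemma obtain_third_element:
  assumes "card e = 3" "a \<in> e" "b \<in> e" "a \<noteq> b"
  obtains c where "e = {a, b, c}" "c \<noteq> a" "c \<noteq> b"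
proof -
  have "card (e - {a, b}) = 1"
    using assms by (simp add: card_Diff_subset)
  then obtain c where "e - {a, b} = {c}" by (rule card_1_singletonE)
  then show ?thesis using assms(2,3) by (intro that) auto
qed

lemma inverse_power_bounds:
  fixes n :: real
  assumes "3 \<le> n"
  shows "1 / n ^ 100 \<le> 1/10" "3 / n ^ 100 \<le> 2 / n ^ 25"
proof -
  have "3 \<le> n ^ 75" using assms self_le_power[of n 75] by simp
  then have "3 * n ^ 25 \<le> n ^ 75 * n ^ 25" using assms by (intro mult_right_mono) auto
  also have "\<dots> = n ^ 100" by (simp flip: power_add)
  finally have "3 * n ^ 25 \<le> n ^ 100" .
  have "(3::real) ^ 3 \<le> n ^ 3" by (rule power_mono) (use assms in auto)
  also have "\<dots> \<le> n ^ 100" by (rule power_increasing) (use assms in auto)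
  finally have "10 \<le> n ^ 100" by simp
  then show "1 / n ^ 100 \<le> 1/10" by (simp add: divide_le_eq)
  have "3 * n ^ 25 \<le> 2 * n ^ 100" using \<open>3 * n ^ 25 \<le> n ^ 100\<close> \<open>10 \<le> n ^ 100\<close> by linarith
  then show "3 / n ^ 100 \<le> 2 / n ^ 25" using assms by (simp add: field_simps)
qed

theorem lemma4p2:
  fixes E :: "'v::finite set set" and v :: "'v \<Rightarrow> real^'v" and v0 :: "real^'v"
    and t :: real and a b :: 'v
  assumes "\<forall>e\<in>E. card e = 3"
    and "sdp_feasible E v v0"
    and "\<forall>x. balanced (1 / real CARD('v) ^ 100) v v0 x"
    and "a \<noteq> b" and "\<exists>e\<in>E. a \<in> e \<and> b \<in> e"
  shows "measure gauss_measure {g \<in> space gauss_measure. a \<in> Sset v v0 t g \<and> b \<in> Sset v v0 t g}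
           \<le> Phibar (2 * t) + 2 / real CARD('v) ^ 25"
proof -
  define n where "n = real CARD('v)"
  define \<epsilon> where "\<epsilon> = 1 / n ^ 100"
  obtain e where "e \<in> E" "a \<in> e" "b \<in> e" using assms(5) by blast
  moreover have "card e = 3" using assms(1) \<open>e \<in> E\<close> by blast
  ultimately obtain c where e: "e = {a, b, c}" "c \<noteq> a" "c \<noteq> b"
    using obtain_third_element assms(4) by metis
  have "3 \<le> n" using card_mono[of UNIV e] \<open>card e = 3\<close> by (simp add: n_def)
  then have \<epsilon>: "0 \<le> \<epsilon>" "\<epsilon> \<le> 1/10" "3 * \<epsilon> \<le> 2 / n ^ 25"
    using inverse_power_bounds by (simp_all add: \<epsilon>_def)
  have unit: "norm v0 = 1" "\<And>x. norm (v x) = 1" and "sum v e = - v0"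
    using assms(2) \<open>e \<in> E\<close> by (auto simp: sdp_feasible_def)
  then have edge: "v a + v b + v c = - v0"
    using e assms(4) by (simp add: algebra_simps)
  have bal: "balanced \<epsilon> v v0 x" for x
    using assms(3) by (simp add: \<epsilon>_def n_def)
  have "norm (ubar v v0 a) = 1"
    by (rule norm_ubar[OF unit(2) unit(1) abs_gam_less_1_if_balanced[OF bal]]) (use \<epsilon> in simp)
  moreover have "norm (ubar v v0 a + ubar v v0 b) \<le> 1 + 3 * \<epsilon>"
    using unit edge bal \<epsilon> by (intro norm_ubar_add_le) auto
  ultimately have "measure gauss_measure {g \<in> space gauss_measure.
                     t \<le> ip_gauss (ubar v v0 a) g \<and> t \<le> ip_gauss (ubar v v0 b) g}
                   \<le> Phibar (2 * t) + 3 * \<epsilon>"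
    using \<epsilon> by (intro measure_ip_gauss_ge_both_le) auto
  then show ?thesis
    using \<epsilon>(3) by (simp add: Sset_def n_def)
qed

end
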